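(* Let $p\ge5$ be a prime. Then $H^1(\mathrm{Sym}(p),X_{\{2\}})=0$, and $H^1(\mathrm{Sym}(p),D_{\{q\}})=0$ for every odd prime $q$.
   Context: $\mathrm{Sym}(p)$ is identified with the group of $p\times p$ permutation matrices (via $\alpha\mapsto[\delta_{i\alpha,j}]_{i,j}$) and acts by conjugation on the group $\mathrm{D}(p,\mathbb{C})$ of invertible diagonal matrices. $D$ is the torsion subgroup of $\mathrm{D}(p,\mathbb{C})$ and $D_{\{q\}}$ its subgroup of elements of $q$-power order; $X=\mathrm{SL}(p,\mathbb{C})\cap\mathrm{D}(p,\mathbb{C})$ and $X_{\{2\}}$ is its subgroup of elements of $2$-power order. These are regarded as $\mathrm{Sym}(p)$-modules. *)

theory Defs
  imports Complex_Main "HOL-Combinatorics.Permutations" "HOL-Computational_Algebra.Primes"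
begin

text \<open>An invertible diagonal p x p complex matrix is represented by its diagonal,
  a function d :: nat => complex with d i nonzero for i < p, normalised
  by d i = 1 for i >= p.  Multiplication of diagonal matrices is pointwise.\<close>

definition diag_group :: "nat \<Rightarrow> (nat \<Rightarrow> complex) set" where
  "diag_group p = {d. (\<forall>i<p. d i \<noteq> 0) \<and> (\<forall>i\<ge>p. d i = 1)}"

definition diag_torsion :: "nat \<Rightarrow> (nat \<Rightarrow> complex) set" where
  "diag_torsion p = {d \<in> diag_group p. \<exists>n>0. \<forall>i<p. d i ^ n = 1}"

definition diag_SL :: "nat \<Rightarrow> (nat \<Rightarrow> complex) set" where
  "diag_SL p = {d \<in> diag_group p. (\<Prod>i<p. d i) = 1}"

definition pow_part :: "nat \<Rightarrow> (nat \<Rightarrow> complex) set \<Rightarrow> nat \<Rightarrow> (nat \<Rightarrow> complex) set" where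
  "pow_part p M q = {d \<in> M. \<exists>k. \<forall>i<p. d i ^ (q ^ k) = 1}"

text \<open>Conjugation action: with permutation matrix P_a = [delta_{a(i), j}],
  P_a d P_a^{-1} has diagonal i |-> d (a i).  With the paper's convention of
  right-written permutations (i a b = (i a) b), the product a b in Sym(p) is
  b o a, and a |-> P_a is a homomorphism; conjugation is a left action.\<close>
definition sym_act :: "(nat \<Rightarrow> nat) \<Rightarrow> (nat \<Rightarrow> complex) \<Rightarrow> (nat \<Rightarrow> complex)" where
  "sym_act a d = (\<lambda>i. d (a i))"

definition cocycles :: "nat \<Rightarrow> (nat \<Rightarrow> complex) set \<Rightarrow> ((nat \<Rightarrow> nat) \<Rightarrow> (nat \<Rightarrow> complex)) set" where
  "cocycles p M = {f. (\<forall>a. a permutes {..<p} \<longrightarrow> f a \<in> M) \<and>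
      (\<forall>a b. a permutes {..<p} \<longrightarrow> b permutes {..<p} \<longrightarrow>
         f (b \<circ> a) = (\<lambda>i. f a i * sym_act a (f b) i))}"

definition is_coboundary :: "nat \<Rightarrow> (nat \<Rightarrow> complex) set \<Rightarrow> ((nat \<Rightarrow> nat) \<Rightarrow> (nat \<Rightarrow> complex)) \<Rightarrow> bool" where
  "is_coboundary p M f \<longleftrightarrow> (\<exists>m\<in>M. \<forall>a. a permutes {..<p} \<longrightarrow>
      f a = (\<lambda>i. sym_act a m i / m i))"

definition H1_vanishes :: "nat \<Rightarrow> (nat \<Rightarrow> complex) set \<Rightarrow> bool" where
  "H1_vanishes p M \<longleftrightarrow> (\<forall>f\<in>cocycles p M. is_coboundary p M f)"

end

theory Submission
  imports Defs "HOL-Number_Theory.Cong"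
begin

text \<open>A crossed homomorphism f is the coboundary of m j = f (0 j) 0 as soon as f s 0 = 1 for
  every s fixing 0, and it suffices to check this on the transpositions t = (x y) with x, y \<noteq> 0,
  which generate the stabiliser of 0.  The cocycle identity for t \<circ> t gives w^2 = 1 for
  w = f t 0.  In D{q} with q odd, w also has q-power order, so w = 1.  In X{2}, conjugating t
  by (0 z) shows f t z = w for z outside {x, y}, and f t x * f t y = 1, so det (f t) = 1 gives
  w^(p-2) = 1, whence w = 1 since p is odd.  Finally, to land in X{2} the potential m is rescaled
  by a p-th root of (det m)^-1 of 2-power order, which exists because p is odd.\<close>

lemma power_eq_one_odd:
  fixes w :: "'a::monoid_mult"
  assumes "w ^ 2 = 1" "w ^ n = 1" "odd n"
  shows "w = 1"
proof -
  obtain k where "n = 2 * k + 1" using \<open>odd n\<close> oddE by blast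
  then have "w ^ n = w * (w ^ 2) ^ k" by (simp add: power_mult)
  then show ?thesis using assms by simp
qed

lemma power_eq_one_mod:
  fixes P :: "'a::monoid_mult"
  assumes "P ^ n = 1"
  shows "P ^ m = P ^ (m mod n)"
proof -
  have "P ^ m = P ^ (n * (m div n) + m mod n)" by simp
  also have "\<dots> = (P ^ n) ^ (m div n) * P ^ (m mod n)" by (simp only: power_add power_mult)
  finally show ?thesis using assms by simp
qed

lemma power_power_eq_one_mono:
  fixes z :: "'a::monoid_mult"
  assumes "z ^ (q ^ k) = 1" "k \<le> K"
  shows "z ^ (q ^ K) = 1"
proof -
  have "q ^ K = q ^ k * q ^ (K - k)" using assms(2) by (simp flip: power_add)
  then show ?thesis using assms(1) by (simp add: power_mult)
qed

lemma uniform_power_exponent: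
  fixes g :: "nat \<Rightarrow> 'a::monoid_mult"
  assumes "\<And>j. j < n \<Longrightarrow> \<exists>k. g j ^ (q ^ k) = 1"
  shows "\<exists>K. \<forall>j<n. g j ^ (q ^ K) = 1"
  using assms
proof (induction n)
  case 0
  then show ?case by simp
next
  case (Suc n)
  then obtain K where K: "\<forall>j<n. g j ^ (q ^ K) = 1" by auto
  obtain k where k: "g n ^ (q ^ k) = 1" using Suc.prems by blast
  have "g j ^ (q ^ max K k) = 1" if "j < Suc n" for j
  proof (cases "j < n")
    case True
    then show ?thesis using K power_power_eq_one_mono[of "g j" q K] by simp
  next
    case False
    with that have "j = n" by simp
    then show ?thesis using k power_power_eq_one_mono[of "g n" q k] by simp
  qed
  then show ?case by blast
qed

lemma root_of_unity_coprime_root: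
  fixes P :: "'a::monoid_mult"
  assumes "coprime p n" "P ^ n = 1"
  shows "\<exists>c. c ^ p = P \<and> c ^ n = 1"
proof -
  obtain r where r: "[p * r = Suc 0] (mod n)" using cong_solve_coprime_nat assms(1) by blast
  have "(P ^ r) ^ p = P ^ (p * r)" by (simp add: mult.commute flip: power_mult)
  also have "\<dots> = P ^ ((p * r) mod n)" by (rule power_eq_one_mod[OF assms(2)])
  also have "\<dots> = P ^ (1 mod n)" using r by (simp add: cong_def)
  also have "\<dots> = P" using power_eq_one_mod[OF assms(2), of 1] by simp
  finally have "(P ^ r) ^ p = P" .
  moreover have "(P ^ r) ^ n = (P ^ n) ^ r" by (simp add: mult.commute flip: power_mult)
  then have "(P ^ r) ^ n = 1" using assms(2) by simp
  ultimately show ?thesis by blast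
qed

locale sym_cocycle =
  fixes p :: nat and f :: "(nat \<Rightarrow> nat) \<Rightarrow> nat \<Rightarrow> 'a::field"
  assumes cocycle: "a permutes {..<p} \<Longrightarrow> b permutes {..<p} \<Longrightarrow> f (b \<circ> a) i = f a i * f b (a i)"
    and nonzero: "a permutes {..<p} \<Longrightarrow> i < p \<Longrightarrow> f a i \<noteq> 0"
begin

lemma cocycle_id: "i < p \<Longrightarrow> f id i = 1"
  using cocycle[OF permutes_id permutes_id, of i] nonzero[OF permutes_id, of i] by simp

lemma cocycle_transpose_square:
  assumes "x < p" "y < p" "z < p"
  shows "f (transpose x y) z * f (transpose x y) (transpose x y z) = 1"
proof -
  have "transpose x y permutes {..<p}" using assms by (intro permutes_swap_id) auto
  from cocycle[OF this this, of z] show ?thesis using cocycle_id[OF \<open>z < p\<close>] by simp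
qed

lemma cocycle_transpose_square_at_fixed_point:
  assumes "x < p" "y < p" "z < p" "z \<noteq> x" "z \<noteq> y"
  shows "f (transpose x y) z ^ 2 = 1"
  using cocycle_transpose_square[OF assms(1-3)] assms(4,5) by (simp add: power2_eq_square)

lemma cocycle_transpose_at_fixed_point:
  assumes "x < p" "y < p" "z < p" "z \<noteq> x" "z \<noteq> y" "0 \<noteq> x" "0 \<noteq> y"
  shows "f (transpose x y) z = f (transpose x y) 0"
proof (cases "z = 0")
  case False
  define t where "t = transpose x y"
  define c where "c = transpose 0 z"
  have tp: "t permutes {..<p}" unfolding t_def using assms by (intro permutes_swap_id) auto
  have cp: "c permutes {..<p}" unfolding c_def using assms by (intro permutes_swap_id) auto
  have "c \<circ> (t \<circ> c) = t"
    unfolding c_def t_def using assms False by (auto simp: fun_eq_iff transpose_def)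
  then have "f t 0 = f (t \<circ> c) 0 * f c (t (c 0))"
    using cocycle[OF permutes_compose[OF cp tp] cp, of 0] by simp
  also have "\<dots> = f t z * (f c 0 * f c z)"
    using cocycle[OF cp tp, of 0] assms False unfolding c_def t_def by simp
  also have "f c 0 * f c z = 1"
    using cocycle_transpose_square[of 0 z 0] assms unfolding c_def by simp
  finally show ?thesis unfolding t_def by simp
qed simp

lemma cocycle_transpose_det:
  assumes det: "(\<Prod>i<p. f (transpose x y) i) = 1"
    and xy: "x < p" "y < p" "x \<noteq> y" "0 \<noteq> x" "0 \<noteq> y"
  shows "f (transpose x y) 0 ^ (p - 2) = 1"
proof -
  define t where "t = transpose x y"
  define w where "w = f t 0"
  have split: "{..<p} = insert x (insert y ({..<p} - {x, y}))" using xy by auto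
  have "(\<Prod>i<p. f t i) = f t x * (f t y * (\<Prod>i\<in>{..<p} - {x, y}. f t i))"
    by (subst split) (simp add: prod.insert_remove xy)
  also have "\<dots> = f t x * f t y * (\<Prod>i\<in>{..<p} - {x, y}. f t i)"
    by (simp only: mult.assoc)
  also have "f t x * f t y = 1"
    using cocycle_transpose_square[of x y x] xy unfolding t_def by simp
  also have "(\<Prod>i\<in>{..<p} - {x, y}. f t i) = (\<Prod>i\<in>{..<p} - {x, y}. w)"
  proof (rule prod.cong)
    fix i assume "i \<in> {..<p} - {x, y}"
    then show "f t i = w"
      using cocycle_transpose_at_fixed_point[of x y i] xy unfolding t_def w_def by simp
  qed simp
  also have "\<dots> = w ^ (p - 2)" using xy by (simp add: card_Diff_subset numeral_2_eq_2)
  finally show ?thesis using det unfolding w_def t_def by simp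
qed

text \<open>Any a factors as (0 (a i)) \<circ> s \<circ> (0 i) with s fixing 0, and s is a product of
  transpositions fixing 0.\<close>

lemma cocycle_eq_coboundary:
  assumes trivial: "\<And>x y. 0 < x \<Longrightarrow> 0 < y \<Longrightarrow> x < p \<Longrightarrow> y < p \<Longrightarrow> x \<noteq> y \<Longrightarrow> f (transpose x y) 0 = 1"
    and a: "a permutes {..<p}" and i: "i < p"
  shows "f a i = f (transpose 0 (a i)) 0 / f (transpose 0 i) 0"
proof -
  have stabiliser: "f s 0 = 1" if "s permutes {..<p}" "s 0 = 0" for s
  proof -
    have "s permutes {1..<p}"
    proof (rule permutes_superset[OF that(1)])
      fix x assume "x \<in> {..<p} - {1..<p}"
      then have "x = 0" by auto
      then show "s x = x" using that(2) by simp
    qed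
    then show ?thesis using finite_atLeastLessThan
    proof (induction s rule: permutes_induct)
      case id
      then show ?case using cocycle_id[of 0] i by (simp add: id_def)
    next
      case (swap x y s)
      have sp: "s permutes {..<p}" using swap.hyps(4) by (rule permutes_subset) auto
      have tp: "transpose x y permutes {..<p}" using swap.hyps by (intro permutes_swap_id) auto
      have "s 0 = 0" using permutes_not_in[OF swap.hyps(4)] by simp
      then show ?case using cocycle[OF sp tp, of 0] swap.IH trivial[of x y] swap.hyps by (simp add: comp_def)
    qed
  qed
  define u where "u = transpose 0 (a i)"
  define v where "v = transpose 0 i"
  have up: "u permutes {..<p}"
    unfolding u_def using permutes_in_image[OF a] i by (intro permutes_swap_id) auto
  have vp: "v permutes {..<p}" unfolding v_def using i by (intro permutes_swap_id) auto
  define s where "s = u \<circ> a \<circ> v"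
  have sp: "s permutes {..<p}" unfolding s_def by (intro permutes_compose up vp a)
  have s0: "s 0 = 0" unfolding s_def u_def v_def by simp
  have "u \<circ> s = a \<circ> v" unfolding s_def u_def by (simp add: fun_eq_iff)
  then have "f v 0 * f a i = f u 0"
    using cocycle[OF vp a, of 0] cocycle[OF sp up, of 0] s0 stabiliser[OF sp s0]
    by (simp add: v_def)
  moreover have "f v 0 \<noteq> 0" using nonzero[OF vp] i by simp
  ultimately show ?thesis unfolding u_def v_def by (simp add: field_simps)
qed

end

lemma cocycles_in: "f \<in> cocycles p M \<Longrightarrow> a permutes {..<p} \<Longrightarrow> f a \<in> M"
  unfolding cocycles_def by blast

lemma sym_cocycleI:
  assumes f: "f \<in> cocycles p M" and M: "M \<subseteq> diag_group p"
  shows "sym_cocycle p f"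
proof
  fix a b i assume "a permutes {..<p}" "b permutes {..<p}"
  then have "f (b \<circ> a) = (\<lambda>i. f a i * sym_act a (f b) i)" using f unfolding cocycles_def by blast
  then show "f (b \<circ> a) i = f a i * f b (a i)" unfolding sym_act_def by (rule fun_cong)
next
  fix a i assume "a permutes {..<p}" "i < p"
  then show "f a i \<noteq> 0" using cocycles_in[OF f] M unfolding diag_group_def by blast
qed

lemma pow_part_diag_torsionI:
  assumes "\<forall>i<p. d i \<noteq> 0" "\<forall>i\<ge>p. d i = 1" "\<forall>i<p. d i ^ (q ^ K) = 1" "0 < q"
  shows "d \<in> pow_part p (diag_torsion p) q"
proof -
  have "\<exists>n>0. \<forall>i<p. d i ^ n = 1" using assms by (intro exI[of _ "q ^ K"]) simp
  then show ?thesis using assms unfolding pow_part_def diag_torsion_def diag_group_def by blast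
qed

lemma pow_part_diag_SLI:
  assumes "\<forall>i<p. d i \<noteq> 0" "\<forall>i\<ge>p. d i = 1" "\<forall>i<p. d i ^ (q ^ K) = 1" "(\<Prod>i<p. d i) = 1"
  shows "d \<in> pow_part p (diag_SL p) q"
  using assms unfolding pow_part_def diag_SL_def diag_group_def by blast

lemma is_coboundaryI:
  assumes f: "f \<in> cocycles p M" and M: "M \<subseteq> diag_group p"
    and m: "m \<in> M"
    and eq: "\<And>a i. a permutes {..<p} \<Longrightarrow> i < p \<Longrightarrow> f a i = m (a i) / m i"
  shows "is_coboundary p M f"
  unfolding is_coboundary_def
proof (intro bexI[OF _ m] allI impI ext)
  fix a i assume a: "a permutes {..<p}"
  show "f a i = sym_act a m i / m i"
  proof (cases "i < p")
    case False
    have "f a i = 1" "m i = 1" using cocycles_in[OF f a] m M False unfolding diag_group_def by auto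
    then show ?thesis using permutes_not_in[OF a] False unfolding sym_act_def by simp
  qed (simp add: eq[OF a] sym_act_def)
qed

lemma H1_vanishes_torsion_odd:
  assumes "0 < p" "odd q"
  shows "H1_vanishes p (pow_part p (diag_torsion p) q)"
  unfolding H1_vanishes_def
proof
  let ?M = "pow_part p (diag_torsion p) q"
  fix f assume f: "f \<in> cocycles p ?M"
  have M: "?M \<subseteq> diag_group p" unfolding pow_part_def diag_torsion_def by auto
  interpret sym_cocycle p f using sym_cocycleI[OF f M] .
  have tp: "transpose x y permutes {..<p}" if "x < p" "y < p" for x y
    using that by (intro permutes_swap_id) auto
  have q_power: "\<exists>k. \<forall>i<p. f (transpose x y) i ^ (q ^ k) = 1" if "x < p" "y < p" for x y
    using cocycles_in[OF f tp[OF that]] unfolding pow_part_def by blast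
  have trivial: "f (transpose x y) 0 = 1" if xy: "0 < x" "0 < y" "x < p" "y < p" "x \<noteq> y" for x y
  proof -
    obtain k where k: "\<forall>i<p. f (transpose x y) i ^ (q ^ k) = 1" using q_power[OF xy(3,4)] ..
    have "f (transpose x y) 0 ^ 2 = 1"
      using cocycle_transpose_square_at_fixed_point[of x y 0] xy by simp
    moreover have "f (transpose x y) 0 ^ (q ^ k) = 1" using k \<open>0 < p\<close> by blast
    moreover have "odd (q ^ k)" using \<open>odd q\<close> by simp
    ultimately show ?thesis by (rule power_eq_one_odd)
  qed
  define m where "m j = (if j < p then f (transpose 0 j) 0 else 1)" for j
  have m_q_power: "\<exists>k. m j ^ (q ^ k) = 1" if "j < p" for j
    using q_power[of 0 j] that \<open>0 < p\<close> unfolding m_def by auto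
  obtain K where "\<forall>j<p. m j ^ (q ^ K) = 1"
    using uniform_power_exponent[of p m q, OF m_q_power] by blast
  moreover have "\<forall>j<p. m j \<noteq> 0" using nonzero tp \<open>0 < p\<close> unfolding m_def by simp
  ultimately have "m \<in> ?M"
    using \<open>odd q\<close> by (intro pow_part_diag_torsionI) (auto simp: m_def odd_pos)
  then show "is_coboundary p ?M f"
  proof (rule is_coboundaryI[OF f M])
    fix a i assume a: "a permutes {..<p}" and i: "i < p"
    moreover have "a i < p" using permutes_in_image[OF a] i by simp
    ultimately show "f a i = m (a i) / m i"
      using cocycle_eq_coboundary[OF trivial] unfolding m_def by simp
  qed
qed

lemma pow_part_diag_SL_rescale:
  fixes m :: "nat \<Rightarrow> complex"
  assumes "coprime p q" "0 < p" "\<forall>j<p. m j \<noteq> 0" "\<forall>j<p. m j ^ (q ^ K) = 1"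
  shows "\<exists>c. c \<noteq> 0 \<and> (\<lambda>j. if j < p then c * m j else 1) \<in> pow_part p (diag_SL p) q"
proof -
  define P where "P = (\<Prod>j<p. m j)"
  have "P ^ (q ^ K) = 1" unfolding P_def prod_power_distrib using assms(4) by simp
  then have "inverse P ^ (q ^ K) = 1" by (simp add: power_inverse)
  moreover have "coprime p (q ^ K)" using \<open>coprime p q\<close> by simp
  ultimately obtain c where c: "c ^ p = inverse P" "c ^ (q ^ K) = 1"
    using root_of_unity_coprime_root by blast
  have "P \<noteq> 0" unfolding P_def using assms(3) by simp
  then have "c \<noteq> 0" using c(1) \<open>0 < p\<close> by (auto simp: zero_power)
  have "(\<Prod>j<p. c * m j) = c ^ p * P" unfolding P_def by (simp add: prod.distrib)
  also have "\<dots> = 1" using c(1) \<open>P \<noteq> 0\<close> by simp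
  finally have "(\<lambda>j. if j < p then c * m j else 1) \<in> pow_part p (diag_SL p) q"
    using assms(3,4) c(2) \<open>c \<noteq> 0\<close>
    by (intro pow_part_diag_SLI[where K = K]) (simp_all add: power_mult_distrib)
  with \<open>c \<noteq> 0\<close> show ?thesis by blast
qed

lemma H1_vanishes_SL:
  assumes "odd p" "coprime p q"
  shows "H1_vanishes p (pow_part p (diag_SL p) q)"
  unfolding H1_vanishes_def
proof
  let ?M = "pow_part p (diag_SL p) q"
  fix f assume f: "f \<in> cocycles p ?M"
  have M: "?M \<subseteq> diag_group p" unfolding pow_part_def diag_SL_def by auto
  interpret sym_cocycle p f using sym_cocycleI[OF f M] .
  have "0 < p" using \<open>odd p\<close> by (simp add: odd_pos)
  have tp: "transpose x y permutes {..<p}" if "x < p" "y < p" for x y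
    using that by (intro permutes_swap_id) auto
  have trivial: "f (transpose x y) 0 = 1" if xy: "0 < x" "0 < y" "x < p" "y < p" "x \<noteq> y" for x y
  proof (rule power_eq_one_odd)
    show "f (transpose x y) 0 ^ 2 = 1"
      using cocycle_transpose_square_at_fixed_point[of x y 0] xy by simp
    have "(\<Prod>i<p. f (transpose x y) i) = 1"
      using cocycles_in[OF f tp[OF xy(3,4)]] unfolding pow_part_def diag_SL_def by simp
    then show "f (transpose x y) 0 ^ (p - 2) = 1" using cocycle_transpose_det xy by simp
    show "odd (p - 2)" using \<open>odd p\<close> xy by simp
  qed
  define m where "m j = f (transpose 0 j) 0" for j
  have m_q_power: "\<exists>k. m j ^ (q ^ k) = 1" if "j < p" for j
    using cocycles_in[OF f tp[of 0 j]] that \<open>0 < p\<close> unfolding m_def pow_part_def by auto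
  obtain K where "\<forall>j<p. m j ^ (q ^ K) = 1"
    using uniform_power_exponent[of p m q, OF m_q_power] by blast
  moreover have "\<forall>j<p. m j \<noteq> 0" using nonzero tp \<open>0 < p\<close> unfolding m_def by simp
  ultimately obtain c where "c \<noteq> 0" and c: "(\<lambda>j. if j < p then c * m j else 1) \<in> ?M"
    using pow_part_diag_SL_rescale \<open>coprime p q\<close> \<open>0 < p\<close> by blast
  from c show "is_coboundary p ?M f"
  proof (rule is_coboundaryI[OF f M])
    fix a i assume a: "a permutes {..<p}" and i: "i < p"
    moreover have "a i < p" using permutes_in_image[OF a] i by simp
    ultimately show "f a i = (if a i < p then c * m (a i) else 1) / (if i < p then c * m i else 1)"
      using cocycle_eq_coboundary[OF trivial] \<open>c \<noteq> 0\<close> unfolding m_def by simp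
  qed
qed

theorem lemma7p3:
  fixes p :: nat
  assumes "prime p" and "p \<ge> 5"
  shows "H1_vanishes p (pow_part p (diag_SL p) 2) \<and>
         (\<forall>q::nat. prime q \<and> odd q \<longrightarrow> H1_vanishes p (pow_part p (diag_torsion p) q))"
proof -
  have "odd p" using assms prime_odd_nat by fastforce
  then have "H1_vanishes p (pow_part p (diag_SL p) 2)"
    by (intro H1_vanishes_SL) (simp_all add: coprime_commute)
  moreover have "H1_vanishes p (pow_part p (diag_torsion p) q)" if "odd q" for q
    using H1_vanishes_torsion_odd \<open>odd p\<close> that by (simp add: odd_pos)
  ultimately show ?thesis by blast
qed

end
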